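(* Let $n\ge 1$ and let $P\in\mathbb{R}^{n\times n}$ satisfy $\|P\|<1$. Let $w\in\mathbb{R}^n$ be a global maximizer of $$L(w)=\langle w,Pw\rangle-\sum_{i=1}^n\log\Big(\sum_{j=1}^n\exp(w_iw_j)\Big)$$ over $\mathbb{R}^n$. Then $$\|w\|^2\le\frac{n\log n}{1-\|P\|}.$$
   Context: $\|w\|$ denotes the Euclidean norm of $w$, $\langle\cdot,\cdot\rangle$ the standard inner product, and $\|P\|$ the operator norm of $P$ induced by the Euclidean norm. *)

theory Defs
  imports "HOL-Analysis.Analysis"
begin

definition objL :: "real^'n^'n \<Rightarrow> real^'n \<Rightarrow> real" where
  "objL P w = inner w (P *v w) - (\<Sum>i\<in>UNIV. ln (\<Sum>j\<in>UNIV. exp (w $ i * w $ j)))"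

end

theory Submission
  imports Defs
begin

(* Comparing the maximizer with w = 0: L(0) = - n log n, while every w satisfies
   L(w) \<le> (\<parallel>P\<parallel> - 1) \<parallel>w\<parallel>^2, because <w, P w> \<le> \<parallel>P\<parallel> \<parallel>w\<parallel>^2 and the i-th log-sum-exp
   term is at least its diagonal summand w_i^2. *)

lemma inner_le_onorm_norm_square:
  fixes f :: "'a::real_inner \<Rightarrow> 'a"
  assumes "bounded_linear f"
  shows "inner x (f x) \<le> onorm f * (norm x)\<^sup>2"
proof -
  have "inner x (f x) \<le> norm x * norm (f x)"
    by (rule norm_cauchy_schwarz)
  also have "\<dots> \<le> norm x * (onorm f * norm x)"
    by (rule mult_left_mono[OF onorm[OF assms]]) simp
  finally show ?thesis
    by (simp add: power2_eq_square algebra_simps)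
qed

lemma ln_sum_exp_ge:
  fixes f :: "'a \<Rightarrow> real"
  assumes "finite A" and "a \<in> A"
  shows "f a \<le> ln (\<Sum>j\<in>A. exp (f j))"
proof -
  have "exp (f a) \<le> (\<Sum>j\<in>A. exp (f j))"
    using assms by (intro member_le_sum) auto
  then show ?thesis
    using assms by (subst ln_ge_iff) (auto intro: sum_pos)
qed

lemma norm_square_le_sum_ln_sum_exp:
  fixes w :: "real^'n"
  shows "(norm w)\<^sup>2 \<le> (\<Sum>i\<in>UNIV. ln (\<Sum>j\<in>UNIV. exp (w $ i * w $ j)))"
proof -
  have "(norm w)\<^sup>2 = (\<Sum>i\<in>UNIV. w $ i * w $ i)"
    by (simp add: norm_vec_def L2_set_def sum_nonneg power2_eq_square)
  also have "\<dots> \<le> (\<Sum>i\<in>UNIV. ln (\<Sum>j\<in>UNIV. exp (w $ i * w $ j)))"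
    by (intro sum_mono ln_sum_exp_ge) auto
  finally show ?thesis .
qed

lemma objL_zero: "objL P 0 = - (real CARD('n) * ln (real CARD('n)))"
  for P :: "real^'n^'n"
  by (simp add: objL_def)

lemma objL_le_onorm_norm_square:
  fixes P :: "real^'n^'n" and w :: "real^'n"
  shows "objL P w \<le> (onorm (\<lambda>x. P *v x) - 1) * (norm w)\<^sup>2"
proof -
  have "inner w (P *v w) \<le> onorm (\<lambda>x. P *v x) * (norm w)\<^sup>2"
    by (intro inner_le_onorm_norm_square matrix_vector_mul_bounded_linear)
  with norm_square_le_sum_ln_sum_exp[of w] show ?thesis
    by (simp add: objL_def algebra_simps)
qed

theorem theorem3p2:
  fixes P :: "real^'n^'n" and w :: "real^'n"
  assumes "onorm (\<lambda>x. P *v x) < 1"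
    and "\<forall>v :: real^'n. objL P v \<le> objL P w"
  shows "(norm w)\<^sup>2 \<le> real CARD('n) * ln (real CARD('n)) / (1 - onorm (\<lambda>x. P *v x))"
proof -
  have "- (real CARD('n) * ln (real CARD('n))) \<le> (onorm (\<lambda>x. P *v x) - 1) * (norm w)\<^sup>2"
    using assms(2) objL_zero[of P] objL_le_onorm_norm_square[of P w]
    by (metis order_trans)
  then show ?thesis
    using assms(1) by (simp add: pos_le_divide_eq algebra_simps)
qed

end
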